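(* Let $p\ge1$ be an integer and consider the hybrid system (2.2) associated with a consistent Runge–Kutta scheme of order $p$ for $\dot z=f(z)$ with continuous step bound $\varphi:\mathbb{R}^n\to(0,+\infty)$. Suppose: (i) there exist a Lyapunov function $V\in C^1(\mathbb{R}^n;\mathbb{R}^+)$ for $\dot z=f(z)$ and a continuous positive definite $\tilde W:\mathbb{R}^n\to\mathbb{R}^+$ such that $V(z(h,x))\le V(x)-h\tilde W(x)$ for all $x\in\mathbb{R}^n$ and $h\in[0,\varphi(x)]$; (ii) there exists $b\ge0$ with $|z(h,x)|\le\exp(b)|x|$ and $|x+hF(h,x)|\le\exp(b)|x|$ for all $x$ and $h\in[0,\varphi(x)]$; (iii) there is a continuous positive definite $C:\mathbb{R}^n\to\mathbb{R}^+$ with $|z(h,x)-x-hF(h,x)|\le C(x)h^{p+1}$ for all $x$ and $h\in[0,\varphi(x)]$, and a constant $\lambda\in(0,1)$ such that $$\varphi(x)\le\Big(\frac{(1-\lambda)\tilde W(x)}{l_V^b(x)C(x)}\Big)^{1/p}\quad\forall x\ne0,$$ where $l_V^b(x):=\max\{|\nabla V(z)|:|z|\le\exp(b)|x|\}$. Then $0\in\mathbb{R}^n$ is URGAS for (2.2). If moreover there exist $\sigma,K>0$ with $\tilde W(x)\ge2\sigma V(x)$ and $V(x)\ge K|x|^2$ for all $x$, then $0$ is robustly K-exponentially stable for (2.2).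
   Context: Standing framework: $f$ locally Lipschitz with $f(0)=0$; $z(t,x)$ is the solution of $\dot z=f(z)$ with $z(0)=x$. A consistent $s$-stage Runge–Kutta scheme has coefficients $a_{ij},b_i$ with $\sum_ib_i=1$ and is represented by $F(h,x):=\sum_{i=1}^sb_if(Y_i)$ where $Y_i=x+h\sum_{j=1}^sa_{ij}f(Y_j)$; the continuous step bound $\varphi$ is assumed small enough that these equations have a unique solution for all $h\in[0,\varphi(x)]$ and that $|F(h,x)|\le|x|M(|x|)$ for some continuous nondecreasing $M$. The hybrid system (2.2): for each locally bounded $u:\mathbb{R}^+\to\mathbb{R}^+$ and $x_0$, $\tau_0=0$, $x(0)=x_0$, $h_i=\varphi(x(\tau_i))\exp(-u(\tau_i))$, $\tau_{i+1}=\tau_i+h_i$, $x(t)=x(\tau_i)+(t-\tau_i)F(h_i,x(\tau_i))$ on $[\tau_i,\tau_{i+1}]$; solution $x(t,x_0;u)$. URGAS: (a) for every $\varepsilon>0$ there is $\delta>0$ with $|x_0|<\delta\Rightarrow|x(t,x_0;u)|<\varepsilon$ for all $t\ge0$, all $u$; (b) for every $R$, $\sup\{|x(t,x_0;u)|:t\ge0,|x_0|\le R,u\}<\infty$; (c) for all $\varepsilon,R$ there is $T$ with $|x(t,x_0;u)|\le\varepsilon$ for $t\ge T$, $|x_0|\le R$, all locally bounded $u\ge0$. Robustly K-exponentially stable: there exist $a\in K_\infty$, $\sigma>0$ with $|x(t,x_0;u)|\le e^{-\sigma t}a(|x_0|)$ for all $t,x_0,u$. A Lyapunov function for $\dot z=f(z)$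 is a positive definite, radially unbounded $C^1$ function $V$ with $\nabla V(x)f(x)<0$ for $x\ne0$. *)

theory Defs
  imports "HOL-Analysis.Analysis"
begin

definition loc_lipschitz :: "('a::real_normed_vector \<Rightarrow> 'b::real_normed_vector) \<Rightarrow> bool" where
  "loc_lipschitz f \<longleftrightarrow> (\<forall>x. \<exists>r>0. \<exists>L. \<forall>y\<in>ball x r. \<forall>y'\<in>ball x r.
      norm (f y - f y') \<le> L * norm (y - y'))"

definition is_flow :: "('a::real_normed_vector \<Rightarrow> 'a) \<Rightarrow> (real \<Rightarrow> 'a \<Rightarrow> 'a) \<Rightarrow> bool" where
  "is_flow f z \<longleftrightarrow> (\<forall>x. z 0 x = x \<and>
     (\<forall>t\<ge>0. ((\<lambda>s. z s x) has_vector_derivative f (z t x)) (at t within {0..})))"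

definition pos_def :: "('a::real_normed_vector \<Rightarrow> real) \<Rightarrow> bool" where
  "pos_def W \<longleftrightarrow> W 0 = 0 \<and> (\<forall>x. x \<noteq> 0 \<longrightarrow> W x > 0)"

definition is_lyapunov :: "('a::euclidean_space \<Rightarrow> 'a) \<Rightarrow> ('a \<Rightarrow> real) \<Rightarrow> ('a \<Rightarrow> 'a) \<Rightarrow> bool" where
  "is_lyapunov f V gV \<longleftrightarrow>
     (\<forall>x. (V has_derivative (\<lambda>v. gV x \<bullet> v)) (at x)) \<and> continuous_on UNIV gV \<and>
     pos_def V \<and> filterlim V at_top at_infinity \<and>
     (\<forall>x. x \<noteq> 0 \<longrightarrow> gV x \<bullet> f x < 0)"

definition lVb :: "('a::euclidean_space \<Rightarrow> 'a) \<Rightarrow> real \<Rightarrow> 'a \<Rightarrow> real" where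
  "lVb gV b x = Sup ((\<lambda>z. norm (gV z)) ` cball 0 (exp b * norm x))"

definition rk_stages :: "nat \<Rightarrow> (nat \<Rightarrow> nat \<Rightarrow> real) \<Rightarrow> ('a::real_normed_vector \<Rightarrow> 'a)
    \<Rightarrow> real \<Rightarrow> 'a \<Rightarrow> (nat \<Rightarrow> 'a) \<Rightarrow> bool" where
  "rk_stages s a f h x Y \<longleftrightarrow> (\<forall>i<s. Y i = x + h *\<^sub>R (\<Sum>j<s. a i j *\<^sub>R f (Y j)))"

definition rk_F :: "nat \<Rightarrow> (nat \<Rightarrow> nat \<Rightarrow> real) \<Rightarrow> (nat \<Rightarrow> real) \<Rightarrow> ('a::real_normed_vector \<Rightarrow> 'a)
    \<Rightarrow> real \<Rightarrow> 'a \<Rightarrow> 'a" where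
  "rk_F s a b f h x = (let Y = (SOME Y. rk_stages s a f h x Y) in (\<Sum>i<s. b i *\<^sub>R f (Y i)))"

fun hyb_seq :: "(real \<Rightarrow> 'a \<Rightarrow> 'a::real_normed_vector) \<Rightarrow> ('a \<Rightarrow> real) \<Rightarrow> (real \<Rightarrow> real)
    \<Rightarrow> 'a \<Rightarrow> nat \<Rightarrow> real \<times> 'a" where
  "hyb_seq F phi u x0 0 = (0, x0)"
| "hyb_seq F phi u x0 (Suc i) =
     (let (\<tau>, x) = hyb_seq F phi u x0 i; h = phi x * exp (- u \<tau>) in (\<tau> + h, x + h *\<^sub>R F h x))"

definition hyb_traj :: "(real \<Rightarrow> 'a \<Rightarrow> 'a::real_normed_vector) \<Rightarrow> ('a \<Rightarrow> real) \<Rightarrow> (real \<Rightarrow> real)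
    \<Rightarrow> 'a \<Rightarrow> real \<Rightarrow> 'a" where
  "hyb_traj F phi u x0 t =
     (let i = (LEAST i. t < fst (hyb_seq F phi u x0 (Suc i)));
          (\<tau>, x) = hyb_seq F phi u x0 i; h = phi x * exp (- u \<tau>)
      in x + (t - \<tau>) *\<^sub>R F h x)"

definition admissible_input :: "(real \<Rightarrow> real) \<Rightarrow> bool" where
  "admissible_input u \<longleftrightarrow> (\<forall>t\<ge>0. u t \<ge> 0) \<and> (\<forall>T\<ge>0. bounded (u ` {0..T}))"

definition URGAS :: "(real \<Rightarrow> 'a \<Rightarrow> 'a::real_normed_vector) \<Rightarrow> ('a \<Rightarrow> real) \<Rightarrow> bool" where
  "URGAS F phi \<longleftrightarrow>
     (\<forall>\<epsilon>>0. \<exists>\<delta>>0. \<forall>x0 u t. norm x0 < \<delta> \<and> admissible_input u \<and> t \<ge> 0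
         \<longrightarrow> norm (hyb_traj F phi u x0 t) < \<epsilon>) \<and>
     (\<forall>R. \<exists>B. \<forall>x0 u t. norm x0 \<le> R \<and> admissible_input u \<and> t \<ge> 0
         \<longrightarrow> norm (hyb_traj F phi u x0 t) \<le> B) \<and>
     (\<forall>\<epsilon>>0. \<forall>R. \<exists>T. \<forall>x0 u t. norm x0 \<le> R \<and> admissible_input u \<and> t \<ge> T \<and> t \<ge> 0
         \<longrightarrow> norm (hyb_traj F phi u x0 t) \<le> \<epsilon>)"

definition class_K_inf :: "(real \<Rightarrow> real) \<Rightarrow> bool" where
  "class_K_inf a \<longleftrightarrow> continuous_on {0..} a \<and> strict_mono_on {0..} a \<and> a 0 = 0 \<and>
     filterlim a at_top at_top"

definition robust_K_exp_stable :: "(real \<Rightarrow> 'a \<Rightarrow> 'a::real_normed_vector) \<Rightarrow> ('a \<Rightarrow> real) \<Rightarrow> bool" where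
  "robust_K_exp_stable F phi \<longleftrightarrow>
     (\<exists>a \<sigma>. class_K_inf a \<and> \<sigma> > 0 \<and>
        (\<forall>x0 u t. admissible_input u \<and> t \<ge> 0 \<longrightarrow>
           norm (hyb_traj F phi u x0 t) \<le> exp (- \<sigma> * t) * a (norm x0)))"

end

theory Submission
  imports Defs
begin

(* The local error bound (iii), the gradient bound l_V^b on the ball of radius
   exp b |x| and the step-size restriction on phi give, by the mean value theorem,
   the discrete Lyapunov descent  V(x + h F(h,x)) <= V(x) - lam h W(x)  for h in [0, phi x]
   (one_step_descent).  Hypothesis (ii) keeps every interpolated point within exp b |x|.
   These two facts are the axioms of the locale lyapunov_hybrid_system, in which the hybrid
   trajectory is studied abstractly: V decreases along the nodes, the nodes reach every
   time (using local boundedness of u), and compactness arguments turn the descent into the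
   three URGAS properties; under W >= 2 sigma V the descent becomes a geometric contraction
   of V, giving the exponential estimate. *)

lemma sublevel_bounded:
  fixes V :: "'a::real_normed_vector \<Rightarrow> real"
  assumes "filterlim V at_top at_infinity"
  shows "\<exists>R. \<forall>x. V x \<le> c \<longrightarrow> norm x < R"
proof -
  have "eventually (\<lambda>x. c + 1 \<le> V x) at_infinity"
    using assms by (simp add: filterlim_at_top)
  then obtain R where R: "\<And>x. R \<le> norm x \<Longrightarrow> c + 1 \<le> V x"
    by (auto simp: eventually_at_infinity)
  show ?thesis
    by (rule exI[of _ R]) (smt (verit) R)
qed

lemma pos_def_min_on_compact:
  fixes g :: "'a::real_normed_vector \<Rightarrow> real"
  assumes g_cont: "continuous_on UNIV g" and g_pd: "pos_def g"
    and K: "compact K" "0 \<notin> K"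
  shows "\<exists>w>0. \<forall>x\<in>K. w \<le> g x"
proof (cases "K = {}")
  case True
  then show ?thesis by (intro exI[of _ 1]) auto
next
  case False
  obtain x1 where x1: "x1 \<in> K" and min: "\<forall>y\<in>K. g x1 \<le> g y"
    using continuous_attains_inf[OF K(1) False continuous_on_subset[OF g_cont]] by blast
  have "g x1 > 0" using g_pd x1 K(2) unfolding pos_def_def by (metis)
  then show ?thesis using min by blast
qed

(* The same on a band  c <= V x <= c'  of a proper Lyapunov-type function V; this gives
   the uniform decay rate needed for uniform attractivity. *)
lemma pos_def_min_on_band:
  fixes V g :: "'a::euclidean_space \<Rightarrow> real"
  assumes V_cont: "continuous_on UNIV V" and V_pd: "pos_def V"
    and V_unb: "filterlim V at_top at_infinity"
    and g_cont: "continuous_on UNIV g" and g_pd: "pos_def g" and c: "0 < c"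
  shows "\<exists>w>0. \<forall>x. c \<le> V x \<and> V x \<le> c' \<longrightarrow> w \<le> g x"
proof -
  define K where "K = {x. c \<le> V x \<and> V x \<le> c'}"
  have "closed K"
    unfolding K_def Collect_conj_eq
    by (intro closed_Int closed_Collect_le continuous_on_const V_cont)
  moreover obtain R where "\<And>x. V x \<le> c' \<Longrightarrow> norm x < R"
    using sublevel_bounded[OF V_unb] by blast
  then have "K \<subseteq> cball 0 R" by (auto simp: K_def less_imp_le)
  then have "bounded K" using bounded_cball bounded_subset by blast
  moreover have "0 \<notin> K" using V_pd c by (simp add: K_def pos_def_def)
  ultimately show ?thesis
    using pos_def_min_on_compact[OF g_cont g_pd, of K] by (auto simp: K_def compact_eq_bounded_closed)
qed

lemma small_sublevel:
  fixes V :: "'a::euclidean_space \<Rightarrow> real"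
  assumes V_cont: "continuous_on UNIV V" and V_pd: "pos_def V"
    and V_unb: "filterlim V at_top at_infinity" and e: "0 < e"
  shows "\<exists>c>0. \<forall>x. V x < c \<longrightarrow> norm x < e"
proof -
  obtain R where R: "\<And>x. V x \<le> 1 \<Longrightarrow> norm x < R" using sublevel_bounded[OF V_unb] by blast
  have "compact (cball 0 R - ball (0::'a) e)" by (simp add: compact_diff)
  moreover have "(0::'a) \<notin> cball 0 R - ball 0 e" using e by simp
  ultimately obtain w where w: "w > 0" "\<forall>x\<in>cball 0 R - ball 0 e. w \<le> V x"
    using pos_def_min_on_compact[OF V_cont V_pd] by blast
  show ?thesis
  proof (intro exI[of _ "min 1 w"] conjI allI impI)
    fix x assume "V x < min 1 w"
    then show "norm x < e" using R[of x] w(2) by (force simp: dist_norm)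
  qed (use w in auto)
qed

lemma small_near_zero:
  fixes V :: "'a::real_normed_vector \<Rightarrow> real"
  assumes V_cont: "continuous_on UNIV V" and V_pd: "pos_def V" and c: "0 < c"
  shows "\<exists>d>0. \<forall>x. norm x < d \<longrightarrow> V x < c"
proof -
  have "isCont V 0" using V_cont by (simp add: continuous_on_eq_continuous_at)
  then obtain d where "d > 0" "\<And>x. dist x 0 < d \<Longrightarrow> dist (V x) (V 0) < c"
    using c unfolding continuous_at_eps_delta by blast
  then show ?thesis using V_pd by (intro exI[of _ d]) (force simp: pos_def_def dist_norm)
qed

(* It dominates g, is
   monotone and continuous, and serves as comparison function in the K-exponential bound;
   the Lipschitz constant l_V^b is an instance (lVb_eq_ball_max). *)
definition ball_max :: "('a::real_normed_vector \<Rightarrow> real) \<Rightarrow> real \<Rightarrow> real" where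
  "ball_max g r = Sup (g ` cball 0 r)"

lemma ball_max_bdd:
  fixes g :: "'a::euclidean_space \<Rightarrow> real"
  assumes "continuous_on UNIV g"
  shows "bdd_above (g ` cball 0 r)"
proof -
  have "compact (g ` cball 0 r)"
    by (intro compact_continuous_image continuous_on_subset[OF assms]) auto
  then show ?thesis by (simp add: bounded_imp_bdd_above compact_imp_bounded)
qed

lemma ball_max_upper:
  fixes g :: "'a::euclidean_space \<Rightarrow> real"
  assumes "continuous_on UNIV g" "norm y \<le> r"
  shows "g y \<le> ball_max g r"
  unfolding ball_max_def using ball_max_bdd[OF assms(1)] assms(2) by (intro cSup_upper) auto

lemma ball_max_mono:
  fixes g :: "'a::euclidean_space \<Rightarrow> real"
  assumes "continuous_on UNIV g" "0 \<le> r" "r \<le> r'"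
  shows "ball_max g r \<le> ball_max g r'"
  unfolding ball_max_def using assms by (intro cSup_subset_mono ball_max_bdd) auto

lemma ball_max_zero: "ball_max g 0 = g 0"
  by (simp add: ball_max_def)

lemma radial_projection:
  fixes y :: "'a::real_normed_vector"
  assumes "0 \<le> r0" "norm y \<le> r" "r - r0 < d" "0 < d"
  shows "\<exists>y'. norm y' \<le> r0 \<and> norm y' \<le> norm y \<and> dist y y' < d"
proof (cases "norm y \<le> r0")
  case True then show ?thesis using assms by (intro exI[of _ y]) auto
next
  case False
  then have ny: "norm y > 0" using assms by linarith
  define y' where "y' = (r0 / norm y) *\<^sub>R y"
  have n1: "norm y' = r0" using ny assms by (simp add: y'_def)
  have "y - y' = (1 - r0 / norm y) *\<^sub>R y" by (simp add: y'_def algebra_simps)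
  then have "dist y y' = \<bar>1 - r0 / norm y\<bar> * norm y" by (simp add: dist_norm)
  also have "\<dots> = norm y - r0" using ny False by (simp add: field_simps abs_if)
  finally show ?thesis using n1 False assms by (intro exI[of _ y']) auto
qed

lemma ball_max_close:
  fixes g :: "'a::euclidean_space \<Rightarrow> real"
  assumes g_cont: "continuous_on UNIV g" and e: "0 < e"
  shows "\<exists>d>0. \<forall>ra rb. 0 \<le> ra \<and> ra \<le> R \<and> 0 \<le> rb \<and> rb \<le> R \<and> ra - rb < d
           \<longrightarrow> ball_max g ra \<le> ball_max g rb + e"
proof -
  have "uniformly_continuous_on (cball (0::'a) R) g"
    by (intro compact_uniformly_continuous continuous_on_subset[OF g_cont]) auto
  then obtain d where d: "d > 0" "\<And>x x'. x \<in> cball 0 R \<Longrightarrow> x' \<in> cball 0 R \<Longrightarrow>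
      dist x' x < d \<Longrightarrow> dist (g x') (g x) < e"
    unfolding uniformly_continuous_on_def using e by metis
  have "ball_max g ra \<le> ball_max g rb + e"
    if ra: "0 \<le> ra" "ra \<le> R" and rb: "0 \<le> rb" "rb \<le> R" and close: "ra - rb < d" for ra rb
    unfolding ball_max_def
  proof (rule cSUP_least)
    show "cball (0::'a) ra \<noteq> {}" using ra by auto
    fix y :: 'a assume "y \<in> cball 0 ra"
    then have ny: "norm y \<le> ra" by simp
    obtain y' where y': "norm y' \<le> rb" "norm y' \<le> norm y" "dist y y' < d"
      using radial_projection[OF rb(1) ny close d(1)] by blast
    have "dist (g y) (g y') < e" using d(2)[of y' y] y' ny ra by auto
    moreover have "g y' \<le> ball_max g rb" using ball_max_upper[OF g_cont y'(1)] .
    ultimately show "g y \<le> Sup (g ` cball 0 rb) + e" unfolding dist_real_def ball_max_def by linarith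
  qed
  then show ?thesis using d(1) by blast
qed

lemma ball_max_continuous:
  fixes g :: "'a::euclidean_space \<Rightarrow> real"
  assumes g_cont: "continuous_on UNIV g"
  shows "continuous_on {0..} (ball_max g)"
  unfolding continuous_on_iff
proof (intro ballI allI impI)
  fix r0 :: real and e :: real assume r0: "r0 \<in> {0..}" and e: "0 < e"
  obtain d where d: "d > 0" and close: "\<And>ra rb. 0 \<le> ra \<Longrightarrow> ra \<le> r0 + 1 \<Longrightarrow> 0 \<le> rb \<Longrightarrow>
      rb \<le> r0 + 1 \<Longrightarrow> ra - rb < d \<Longrightarrow> ball_max g ra \<le> ball_max g rb + e / 2"
    using ball_max_close[OF g_cont, of "e / 2" "r0 + 1"] e by auto
  show "\<exists>d>0. \<forall>r\<in>{0..}. dist r r0 < d \<longrightarrow> dist (ball_max g r) (ball_max g r0) < e"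
  proof (intro exI[of _ "min 1 d"] conjI ballI impI)
    fix r assume r: "r \<in> {0..}" and "dist r r0 < min 1 d"
    then have "\<bar>r - r0\<bar> < min 1 d" by (simp add: dist_real_def)
    then have "ball_max g r \<le> ball_max g r0 + e / 2" "ball_max g r0 \<le> ball_max g r + e / 2"
      using close[of r r0] close[of r0 r] r r0 by auto
    then show "dist (ball_max g r) (ball_max g r0) < e" using e by (simp add: dist_real_def)
  qed (use d in simp)
qed

lemma lVb_eq_ball_max: "lVb gV b x = ball_max (\<lambda>y. norm (gV y)) (exp b * norm x)"
  by (simp add: lVb_def ball_max_def)

(* Mean value theorem: on the ball of radius exp b |x|, V is Lipschitz with constant l_V^b(x). *)
lemma gradient_lipschitz_on_ball:
  fixes V :: "'a::euclidean_space \<Rightarrow> real"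
  assumes V_deriv: "\<And>y. (V has_derivative (\<lambda>v. gV y \<bullet> v)) (at y)"
    and gV_cont: "continuous_on UNIV gV"
    and y: "norm y \<le> exp b * norm x" and y': "norm y' \<le> exp b * norm x"
  shows "\<bar>V y - V y'\<bar> \<le> lVb gV b x * norm (y - y')"
proof -
  define S where "S = cball (0::'a) (exp b * norm x)"
  have grad_le: "norm (gV w) \<le> lVb gV b x" if "w \<in> S" for w
    unfolding lVb_eq_ball_max using that
    by (intro ball_max_upper continuous_on_norm gV_cont) (simp add: S_def)
  have "norm (V y - V y') \<le> lVb gV b x * norm (y - y')"
  proof (rule differentiable_bound[where f'="\<lambda>w v. gV w \<bullet> v"])
    show "convex S" unfolding S_def by simp
    show "(V has_derivative (\<lambda>v. gV w \<bullet> v)) (at w within S)" if "w \<in> S" for w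
      using V_deriv has_derivative_at_withinI by blast
    show "onorm (\<lambda>v. gV w \<bullet> v) \<le> lVb gV b x" if "w \<in> S" for w
    proof (rule onorm_le)
      fix v :: 'a
      have "norm (gV w \<bullet> v) \<le> norm (gV w) * norm v" using Cauchy_Schwarz_ineq2 by simp
      also have "\<dots> \<le> lVb gV b x * norm v" using grad_le[OF that] by (simp add: mult_right_mono)
      finally show "norm (gV w \<bullet> v) \<le> lVb gV b x * norm v" .
    qed
    show "y \<in> S" "y' \<in> S" using y y' by (auto simp: S_def)
  qed
  then show ?thesis by simp
qed

lemma power_le_of_le_root:
  fixes h Q :: real
  assumes "0 \<le> h" "h \<le> Q powr (1 / real p)" "0 < Q" "p \<ge> 1"
  shows "h ^ p \<le> Q"
proof -
  have "h ^ p \<le> (Q powr (1 / real p)) ^ p" using assms by (simp add: power_mono)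
  also have "\<dots> = Q" using assms by (simp add: powr_realpow[symmetric] powr_powr)
  finally show ?thesis .
qed

lemma one_step_descent:
  fixes V :: "'a::euclidean_space \<Rightarrow> real"
  assumes V_deriv: "\<And>y. (V has_derivative (\<lambda>v. gV y \<bullet> v)) (at y)"
    and gV_cont: "continuous_on UNIV gV"
    and V_pd: "pos_def V" and W_pd: "pos_def W" and C_pd: "pos_def C"
    and exact_decrease: "V y_ex \<le> V x - h * W x"
    and y_ex: "norm y_ex \<le> exp b * norm x" and y_num: "norm y_num \<le> exp b * norm x"
    and local_error: "norm (y_ex - y_num) \<le> C x * h ^ (p + 1)"
    and lam: "lam < 1" and p: "p \<ge> 1" and h: "0 \<le> h"
    and step_bound: "x \<noteq> 0 \<Longrightarrow> h \<le> ((1 - lam) * W x / (lVb gV b x * C x)) powr (1 / real p)"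
  shows "V y_num \<le> V x - lam * h * W x"
proof (cases "x = 0")
  case True
  then show ?thesis using y_num V_pd W_pd by (simp add: pos_def_def)
next
  case False
  define L where "L = lVb gV b x"
  have Cpos: "C x > 0" and Wpos: "W x > 0" using C_pd W_pd False by (auto simp: pos_def_def)
  have "norm (gV 0) \<le> L"
    unfolding L_def lVb_eq_ball_max by (intro ball_max_upper continuous_on_norm gV_cont) simp
  then have "L \<ge> 0" by (meson norm_ge_zero order_trans)
  have error_small: "L * C x * h ^ p \<le> (1 - lam) * W x"
  proof (cases "L = 0")
    case True then show ?thesis using lam Wpos by simp
  next
    case False
    define Q where "Q = (1 - lam) * W x / (L * C x)"
    have "L > 0" using \<open>L \<ge> 0\<close> False by simp
    then have "Q > 0" unfolding Q_def using lam Wpos Cpos by simp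
    then have "h ^ p \<le> Q"
      using power_le_of_le_root h p step_bound[OF \<open>x \<noteq> 0\<close>] by (simp add: Q_def L_def)
    then have "L * C x * h ^ p \<le> L * C x * Q" using \<open>L > 0\<close> Cpos by simp
    also have "\<dots> = (1 - lam) * W x" unfolding Q_def using \<open>L > 0\<close> Cpos by simp
    finally show ?thesis .
  qed
  have "V y_num \<le> V y_ex + L * norm (y_ex - y_num)"
    using gradient_lipschitz_on_ball[OF V_deriv gV_cont y_ex y_num] by (simp add: L_def)
  also have "\<dots> \<le> V y_ex + L * (C x * h ^ (p + 1))"
    using local_error \<open>L \<ge> 0\<close> by (simp add: mult_left_mono)
  also have "L * (C x * h ^ (p + 1)) = h * (L * C x * h ^ p)" by (simp add: algebra_simps)
  also have "\<dots> \<le> h * ((1 - lam) * W x)" using error_small h by (simp add: mult_left_mono)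
  finally show ?thesis using exact_decrease by (simp add: algebra_simps)
qed

lemma segment_norm_bound:
  fixes x v :: "'a::real_normed_vector"
  assumes end_bound: "norm (x + h *\<^sub>R v) \<le> e * norm x" and e: "1 \<le> e"
    and t: "0 \<le> t" "t \<le> h"
  shows "norm (x + t *\<^sub>R v) \<le> e * norm x"
proof (cases "h = 0")
  case True then show ?thesis using t e by (simp add: mult_le_cancel_right1)
next
  case False
  define th where "th = t / h"
  have th: "0 \<le> th" "th \<le> 1" "th * h = t" using t False by (auto simp: th_def)
  have "x + t *\<^sub>R v = (1 - th) *\<^sub>R x + th *\<^sub>R (x + h *\<^sub>R v)"
    by (simp add: algebra_simps flip: th(3))
  then have "norm (x + t *\<^sub>R v) \<le> (1 - th) * norm x + th * norm (x + h *\<^sub>R v)"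
    using th by (smt (verit) norm_scaleR norm_triangle_ineq abs_of_nonneg)
  also have "\<dots> \<le> (1 - th) * (e * norm x) + th * (e * norm x)"
    using th e end_bound by (intro add_mono mult_left_mono) (auto simp: mult_le_cancel_right1)
  finally show ?thesis by (simp add: algebra_simps)
qed

lemma class_K_inf_sqrt_comparison:
  assumes m_cont: "continuous_on {0..} m" and m_mono: "\<And>r r'. 0 \<le> r \<Longrightarrow> r \<le> r' \<Longrightarrow> m r \<le> m r'"
    and m0: "m 0 = 0" and c: "0 < c"
  shows "class_K_inf (\<lambda>r. r + c * sqrt (m r))"
  unfolding class_K_inf_def
proof (intro conjI)
  have m_nonneg: "0 \<le> m r" if "0 \<le> r" for r using m_mono[OF order_refl that] m0 by simp
  show "continuous_on {0..} (\<lambda>r. r + c * sqrt (m r))"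
    by (intro continuous_intros continuous_on_compose2[OF continuous_on_real_sqrt m_cont]) auto
  show "strict_mono_on {0..} (\<lambda>r. r + c * sqrt (m r))"
  proof (rule strict_mono_onI)
    fix r r' :: real assume "r \<in> {0..}" "r < r'"
    then have "sqrt (m r) \<le> sqrt (m r')" using m_mono[of r r'] by simp
    then show "r + c * sqrt (m r) < r' + c * sqrt (m r')"
      using \<open>r < r'\<close> c by (smt (verit) mult_left_mono)
  qed
  show "0 + c * sqrt (m 0) = 0" by (simp add: m0)
  show "filterlim (\<lambda>r. r + c * sqrt (m r)) at_top at_top"
  proof (rule filterlim_at_top_mono[OF filterlim_ident])
    show "eventually (\<lambda>r. r \<le> r + c * sqrt (m r)) at_top"
      using eventually_ge_at_top[of "0::real"] by eventually_elim (use m_nonneg c in simp)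
  qed
qed

locale lyapunov_hybrid_system =
  fixes F :: "real \<Rightarrow> 'a::euclidean_space \<Rightarrow> 'a" and phi V W :: "'a \<Rightarrow> real" and lam eb :: real
  assumes phi_cont: "continuous_on UNIV phi" and phi_pos: "\<And>x. phi x > 0"
    and V_cont: "continuous_on UNIV V" and V_pd: "pos_def V" and V_unb: "filterlim V at_top at_infinity"
    and W_cont: "continuous_on UNIV W" and W_pd: "pos_def W"
    and lam_pos: "lam > 0" and eb_pos: "eb > 0"
    and descent: "\<And>x h. 0 \<le> h \<Longrightarrow> h \<le> phi x \<Longrightarrow> V (x + h *\<^sub>R F h x) \<le> V x - lam * h * W x"
    and segment: "\<And>x h t. 0 \<le> h \<Longrightarrow> h \<le> phi x \<Longrightarrow> 0 \<le> t \<Longrightarrow> t \<le> h \<Longrightarrow>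
                   norm (x + t *\<^sub>R F h x) \<le> eb * norm x"
begin

definition tau where "tau u x0 i = fst (hyb_seq F phi u x0 i)"
definition xs where "xs u x0 i = snd (hyb_seq F phi u x0 i)"
definition hs where "hs u x0 i = phi (xs u x0 i) * exp (- u (tau u x0 i))"

lemma seq_0 [simp]: "tau u x0 0 = 0" "xs u x0 0 = x0"
  by (simp_all add: tau_def xs_def)

lemma seq_Suc: "tau u x0 (Suc i) = tau u x0 i + hs u x0 i"
  "xs u x0 (Suc i) = xs u x0 i + hs u x0 i *\<^sub>R F (hs u x0 i) (xs u x0 i)"
  by (simp_all add: tau_def xs_def hs_def Let_def case_prod_beta)

lemma V_nonneg: "V x \<ge> 0"
  using V_pd unfolding pos_def_def by (metis order.strict_implies_order order_refl)

lemma W_nonneg: "W x \<ge> 0"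
  using W_pd unfolding pos_def_def by (metis order.strict_implies_order order_refl)

lemma hs_pos: "hs u x0 i > 0" by (simp add: hs_def phi_pos)

context
  fixes u :: "real \<Rightarrow> real" and x0 :: 'a assumes adm: "admissible_input u"
begin

lemma tau_nonneg: "tau u x0 i \<ge> 0"
  by (induction i) (auto simp: seq_Suc intro: add_nonneg_nonneg less_imp_le hs_pos)

lemma hs_le_phi: "hs u x0 i \<le> phi (xs u x0 i)"
proof -
  have "u (tau u x0 i) \<ge> 0" using adm tau_nonneg by (simp add: admissible_input_def)
  then show ?thesis unfolding hs_def using phi_pos
    by (metis exp_le_one_iff mult.right_neutral mult_left_mono less_imp_le neg_le_0_iff_le)
qed

lemma V_step: "V (xs u x0 (Suc i)) \<le> V (xs u x0 i) - lam * hs u x0 i * W (xs u x0 i)"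
  unfolding seq_Suc using descent[OF less_imp_le[OF hs_pos] hs_le_phi] .

lemma V_antimono: "j \<le> i \<Longrightarrow> V (xs u x0 i) \<le> V (xs u x0 j)"
proof (induction i rule: dec_induct)
  case (step i)
  have "0 \<le> lam * hs u x0 i * W (xs u x0 i)"
    using lam_pos hs_pos[of u x0 i] W_nonneg by simp
  then show ?case using V_step[of i] step.IH by linarith
qed simp

lemma V_le_initial: "V (xs u x0 i) \<le> V x0"
  using V_antimono[of 0 i] by simp

(* The nodes exhaust [0, oo): the states stay in a compact sublevel set where phi is bounded
   below, and u is bounded on [0, T], so the step sizes are bounded below up to time T. *)
lemma tau_unbounded: "\<exists>k. T < tau u x0 (Suc k)"
proof (rule ccontr)
  assume "\<not> ?thesis"
  then have tau_Suc_le: "tau u x0 (Suc k) \<le> T" for k by (simp add: not_less)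
  have "0 \<le> T" using tau_Suc_le[of 0] tau_nonneg[of "Suc 0"] by linarith
  then have tau_le: "tau u x0 k \<le> T" for k using tau_Suc_le by (cases k) auto
  obtain R where R: "\<And>x. V x \<le> V x0 \<Longrightarrow> norm x < R" using sublevel_bounded[OF V_unb] by blast
  have xs_in: "xs u x0 k \<in> cball 0 R" for k using R[OF V_le_initial] by (simp add: less_imp_le)
  obtain y where y: "\<forall>x\<in>cball 0 R. phi y \<le> phi x"
    using continuous_attains_inf[OF compact_cball _ continuous_on_subset[OF phi_cont]] xs_in by blast
  have "bounded (u ` {0..T})" using adm tau_le[of 0] by (simp add: admissible_input_def)
  then obtain U where U: "\<And>t. t \<in> {0..T} \<Longrightarrow> u t \<le> U"
    unfolding bounded_iff by (metis atLeastAtMost_iff image_eqI abs_le_D1 real_norm_def)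
  define d where "d = phi y * exp (- U)"
  have "d > 0" using phi_pos by (simp add: d_def)
  have d_le: "d \<le> hs u x0 k" for k
    unfolding d_def hs_def using y xs_in[of k] U[of "tau u x0 k"] tau_le tau_nonneg phi_pos
    by (intro mult_mono) (auto intro: less_imp_le)
  have "real k * d \<le> tau u x0 k" for k
  proof (induction k)
    case (Suc k) then show ?case using d_le[of k] by (simp add: seq_Suc algebra_simps)
  qed simp
  moreover obtain k where "T / d < real k" using reals_Archimedean2 by blast
  ultimately show False using tau_le[of k] \<open>d > 0\<close>
    by (smt (verit, best) mult.commute pos_divide_less_eq)
qed

lemma trajectory_node_bound:
  assumes t: "t \<ge> 0"
  shows "\<exists>i. tau u x0 i \<le> t \<and> t < tau u x0 (Suc i) \<and>
     norm (hyb_traj F phi u x0 t) \<le> eb * norm (xs u x0 i)"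
proof -
  define i where "i = (LEAST i. t < tau u x0 (Suc i))"
  obtain k where "t < tau u x0 (Suc k)" using tau_unbounded by blast
  then have before_next: "t < tau u x0 (Suc i)" unfolding i_def by (rule LeastI)
  have after_node: "tau u x0 i \<le> t"
  proof (cases i)
    case (Suc j)
    then have "\<not> t < tau u x0 (Suc j)" unfolding i_def by (metis i_def lessI not_less_Least)
    then show ?thesis using Suc by simp
  qed (use t in simp)
  have traj: "hyb_traj F phi u x0 t = xs u x0 i + (t - tau u x0 i) *\<^sub>R F (hs u x0 i) (xs u x0 i)"
    by (simp add: hyb_traj_def tau_def xs_def hs_def i_def Let_def case_prod_beta)
  have "norm (hyb_traj F phi u x0 t) \<le> eb * norm (xs u x0 i)"
    unfolding traj using before_next after_node
    by (intro segment less_imp_le[OF hs_pos] hs_le_phi) (auto simp: seq_Suc)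
  then show ?thesis using before_next after_node by blast
qed

lemma V_linear_decrease:
  assumes W_lower: "\<And>x. c \<le> V x \<Longrightarrow> V x \<le> V x0 \<Longrightarrow> w \<le> W x"
    and above: "\<forall>j<k. c \<le> V (xs u x0 j)"
  shows "V (xs u x0 k) \<le> V x0 - lam * w * tau u x0 k"
  using above
proof (induction k)
  case (Suc k)
  then have IH: "V (xs u x0 k) \<le> V x0 - lam * w * tau u x0 k" by simp
  have "w \<le> W (xs u x0 k)" using W_lower Suc.prems V_le_initial by simp
  then have "lam * hs u x0 k * w \<le> lam * hs u x0 k * W (xs u x0 k)"
    using lam_pos hs_pos[of u x0 k] by simp
  then show ?case using V_step[of k] IH by (simp add: seq_Suc algebra_simps)
qed simp

lemma sublevel_reached:
  assumes W_lower: "\<And>x. c \<le> V x \<Longrightarrow> V x \<le> V x0 \<Longrightarrow> w \<le> W x"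
    and late: "V x0 < lam * w * tau u x0 (Suc i)"
  shows "V (xs u x0 i) < c"
proof (rule ccontr)
  assume "\<not> ?thesis"
  then have "\<forall>j<Suc i. c \<le> V (xs u x0 j)"
    using V_antimono by (meson less_Suc_eq_le not_less order_trans)
  then have "V (xs u x0 (Suc i)) \<le> V x0 - lam * w * tau u x0 (Suc i)"
    using V_linear_decrease[of c w "Suc i"] W_lower by blast
  then show False using late V_nonneg[of "xs u x0 (Suc i)"] by linarith
qed

context
  fixes \<sigma> :: real assumes W_ge_V: "\<And>x. 2 * \<sigma> * V x \<le> W x"
begin

lemma V_contraction: "V (xs u x0 (Suc i)) \<le> V (xs u x0 i) * (1 - 2 * lam * \<sigma> * hs u x0 i)"
proof -
  have "lam * hs u x0 i * (2 * \<sigma> * V (xs u x0 i)) \<le> lam * hs u x0 i * W (xs u x0 i)"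
    using W_ge_V lam_pos hs_pos[of u x0 i] by (intro mult_left_mono) auto
  then show ?thesis using V_step[of i] by (simp add: algebra_simps)
qed

lemma V_exponential_decay: "V (xs u x0 i) \<le> exp (- 2 * lam * \<sigma> * tau u x0 i) * V x0"
proof (induction i)
  case (Suc i)
  have "1 - 2 * lam * \<sigma> * hs u x0 i \<le> exp (- 2 * lam * \<sigma> * hs u x0 i)"
    using exp_ge_add_one_self[of "- 2 * lam * \<sigma> * hs u x0 i"] by simp
  then have "V (xs u x0 (Suc i)) \<le> V (xs u x0 i) * exp (- 2 * lam * \<sigma> * hs u x0 i)"
    using V_contraction[of i] V_nonneg[of "xs u x0 i"] by (smt (verit) mult_left_mono)
  also have "\<dots> \<le> exp (- 2 * lam * \<sigma> * tau u x0 i) * V x0 * exp (- 2 * lam * \<sigma> * hs u x0 i)"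
    using Suc by (simp add: mult_right_mono)
  also have "\<dots> = exp (- 2 * lam * \<sigma> * tau u x0 (Suc i)) * V x0"
    by (simp add: seq_Suc algebra_simps mult_exp_exp)
  finally show ?case .
qed simp

(* At a nonzero node the contraction factor is nonnegative, so one step is short
   relative to the rate. *)
lemma step_rate_small:
  assumes "xs u x0 i \<noteq> 0"
  shows "lam * \<sigma> * hs u x0 i \<le> 1 / 2"
proof -
  have "V (xs u x0 i) > 0" using assms V_pd by (simp add: pos_def_def)
  moreover have "0 \<le> V (xs u x0 i) * (1 - 2 * lam * \<sigma> * hs u x0 i)"
    using V_contraction[of i] V_nonneg[of "xs u x0 (Suc i)"] by linarith
  ultimately show ?thesis by (simp add: zero_le_mult_iff)
qed

lemma node_norm_decay:
  assumes K: "K > 0" and V_ge: "\<And>x. K * (norm x)\<^sup>2 \<le> V x"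
  shows "norm (xs u x0 i) \<le> exp (- lam * \<sigma> * tau u x0 i) * sqrt (V x0 / K)"
proof -
  have "(exp (- lam * \<sigma> * tau u x0 i))\<^sup>2 = exp (- 2 * lam * \<sigma> * tau u x0 i)"
    by (simp add: power2_eq_square mult_exp_exp)
  then have "K * (norm (xs u x0 i))\<^sup>2 \<le> (exp (- lam * \<sigma> * tau u x0 i))\<^sup>2 * V x0"
    using V_ge[of "xs u x0 i"] V_exponential_decay[of i] by simp
  then have "(norm (xs u x0 i))\<^sup>2 \<le> (exp (- lam * \<sigma> * tau u x0 i))\<^sup>2 * (V x0 / K)"
    using K by (simp add: pos_le_divide_eq mult.commute mult.left_commute)
  then have "norm (xs u x0 i) \<le> sqrt ((exp (- lam * \<sigma> * tau u x0 i))\<^sup>2 * (V x0 / K))"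
    using real_le_rsqrt by blast
  also have "\<dots> = exp (- lam * \<sigma> * tau u x0 i) * sqrt (V x0 / K)"
    by (simp only: real_sqrt_mult real_sqrt_abs) simp
  finally show ?thesis .
qed

end

end

lemma uniform_stability:
  assumes e: "e > 0"
  shows "\<exists>d>0. \<forall>x0 u t. norm x0 < d \<and> admissible_input u \<and> t \<ge> 0 \<longrightarrow> norm (hyb_traj F phi u x0 t) < e"
proof -
  obtain c where c: "c > 0" "\<And>x. V x < c \<Longrightarrow> norm x < e / eb"
    using small_sublevel[OF V_cont V_pd V_unb, of "e / eb"] e eb_pos by auto
  obtain d where d: "d > 0" "\<And>x. norm x < d \<Longrightarrow> V x < c"
    using small_near_zero[OF V_cont V_pd c(1)] by blast
  have "norm (hyb_traj F phi u x0 t) < e"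
    if x0: "norm x0 < d" and adm: "admissible_input u" and t: "t \<ge> 0" for x0 u t
  proof -
    obtain i where i: "norm (hyb_traj F phi u x0 t) \<le> eb * norm (xs u x0 i)"
      using trajectory_node_bound[OF adm t] by blast
    have "norm (xs u x0 i) < e / eb" using c(2) V_le_initial[OF adm] d(2)[OF x0] by (meson le_less_trans)
    then show ?thesis using i eb_pos by (simp add: field_simps)
  qed
  then show ?thesis using d(1) by blast
qed

lemma uniform_boundedness:
  "\<exists>B. \<forall>x0 u t. norm x0 \<le> R \<and> admissible_input u \<and> t \<ge> 0 \<longrightarrow> norm (hyb_traj F phi u x0 t) \<le> B"
proof -
  obtain R2 where R2: "\<And>x. V x \<le> ball_max V R \<Longrightarrow> norm x < R2" using sublevel_bounded[OF V_unb] by blast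
  have "norm (hyb_traj F phi u x0 t) \<le> eb * R2"
    if x0: "norm x0 \<le> R" and adm: "admissible_input u" and t: "t \<ge> 0" for x0 u t
  proof -
    obtain i where i: "norm (hyb_traj F phi u x0 t) \<le> eb * norm (xs u x0 i)"
      using trajectory_node_bound[OF adm t] by blast
    have "V (xs u x0 i) \<le> ball_max V R"
      using V_le_initial[OF adm] ball_max_upper[OF V_cont x0] by (meson order_trans)
    then have "norm (xs u x0 i) \<le> R2" using R2 by (simp add: less_imp_le)
    then show ?thesis using i eb_pos by (smt (verit) mult_left_mono)
  qed
  then show ?thesis by blast
qed

lemma uniform_attractivity:
  assumes e: "e > 0"
  shows "\<exists>T. \<forall>x0 u t. norm x0 \<le> R \<and> admissible_input u \<and> t \<ge> T \<and> t \<ge> 0 \<longrightarrow>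
           norm (hyb_traj F phi u x0 t) \<le> e"
proof -
  obtain c where c: "c > 0" "\<And>x. V x < c \<Longrightarrow> norm x < e / eb"
    using small_sublevel[OF V_cont V_pd V_unb, of "e / eb"] e eb_pos by auto
  obtain w where w: "w > 0" "\<And>x. c \<le> V x \<and> V x \<le> ball_max V R \<Longrightarrow> w \<le> W x"
    using pos_def_min_on_band[OF V_cont V_pd V_unb W_cont W_pd c(1)] by blast
  define T where "T = ball_max V R / (lam * w)"
  have "norm (hyb_traj F phi u x0 t) \<le> e"
    if x0: "norm x0 \<le> R" and adm: "admissible_input u" and t: "t \<ge> T" "t \<ge> 0" for x0 u t
  proof -
    obtain i where i: "t < tau u x0 (Suc i)" "norm (hyb_traj F phi u x0 t) \<le> eb * norm (xs u x0 i)"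
      using trajectory_node_bound[OF adm t(2)] by blast
    have V_x0: "V x0 \<le> ball_max V R" by (rule ball_max_upper[OF V_cont x0])
    have "ball_max V R \<le> lam * w * t"
      using t(1) lam_pos w(1) by (simp add: T_def field_simps)
    also have "\<dots> < lam * w * tau u x0 (Suc i)" using i(1) lam_pos w(1) by simp
    finally have "V x0 < lam * w * tau u x0 (Suc i)" using V_x0 by linarith
    then have "V (xs u x0 i) < c"
      by (rule sublevel_reached[OF adm, rotated]) (use w(2) V_x0 in auto)
    then have "norm (xs u x0 i) < e / eb" by (rule c(2))
    then show ?thesis using i(2) eb_pos by (simp add: field_simps)
  qed
  then show ?thesis by blast
qed

theorem urgas: "URGAS F phi"
  unfolding URGAS_def using uniform_stability uniform_boundedness uniform_attractivity by blast

theorem exponential_stability: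
  assumes \<sigma>: "\<sigma> > 0" and K: "K > 0"
    and W_ge_V: "\<And>x. 2 * \<sigma> * V x \<le> W x" and V_ge: "\<And>x. K * (norm x)\<^sup>2 \<le> V x"
  shows "robust_K_exp_stable F phi"
proof -
  define s where "s = lam * \<sigma>"
  define c where "c = eb * exp (1/2) / sqrt K"
  define a where "a = (\<lambda>r. r + c * sqrt (ball_max V r))"
  have "s > 0" using lam_pos \<sigma> by (simp add: s_def)
  have "c > 0" using eb_pos K by (simp add: c_def)
  have a_K: "class_K_inf a"
    unfolding a_def using V_pd \<open>c > 0\<close>
    by (intro class_K_inf_sqrt_comparison ball_max_continuous ball_max_mono V_cont)
      (auto simp: ball_max_zero pos_def_def)
  have V_x0: "V x0 \<le> ball_max V (norm x0)" for x0 by (rule ball_max_upper[OF V_cont]) simp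
  have bound: "norm (hyb_traj F phi u x0 t) \<le> exp (- s * t) * a (norm x0)"
    if adm: "admissible_input u" and t: "t \<ge> 0" for u x0 t
  proof -
    obtain i where i: "tau u x0 i \<le> t" "t < tau u x0 (Suc i)"
      "norm (hyb_traj F phi u x0 t) \<le> eb * norm (xs u x0 i)"
      using trajectory_node_bound[OF adm t] by blast
    have "0 \<le> sqrt (ball_max V (norm x0))" using V_x0[of x0] V_nonneg[of x0] by simp
    then have "c * sqrt (ball_max V (norm x0)) \<le> a (norm x0)" by (simp add: a_def)
    show ?thesis
    proof (cases "xs u x0 i = 0")
      case True
      then show ?thesis using i(3) \<open>c > 0\<close> \<open>0 \<le> sqrt _\<close> by (simp add: a_def)
    next
      case False
      have "t \<le> tau u x0 i + hs u x0 i" using i(2) by (simp add: seq_Suc)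
      then have "s * t \<le> s * tau u x0 i + s * hs u x0 i"
        using \<open>s > 0\<close> by (simp add: distrib_left[symmetric])
      moreover have "s * hs u x0 i \<le> 1/2"
        using step_rate_small[OF adm W_ge_V False] by (simp add: s_def)
      ultimately have "s * t \<le> s * tau u x0 i + 1/2" by linarith
      then have decay: "exp (- s * tau u x0 i) \<le> exp (1/2) * exp (- s * t)"
        by (simp add: mult_exp_exp)
      have "norm (xs u x0 i) \<le> exp (- s * tau u x0 i) * sqrt (V x0 / K)"
        using node_norm_decay[OF adm W_ge_V K V_ge] by (simp add: s_def)
      also have "\<dots> \<le> exp (1/2) * exp (- s * t) * (sqrt (ball_max V (norm x0)) / sqrt K)"
      proof (rule mult_mono)
        show "sqrt (V x0 / K) \<le> sqrt (ball_max V (norm x0)) / sqrt K"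
          unfolding real_sqrt_divide using V_x0[of x0] K by (simp add: divide_right_mono)
      qed (use decay V_nonneg[of x0] K in simp_all)
      finally have node: "norm (xs u x0 i) \<le> exp (1/2) * exp (- s * t) * (sqrt (ball_max V (norm x0)) / sqrt K)" .
      have "eb * norm (xs u x0 i) \<le> eb * (exp (1/2) * exp (- s * t) * (sqrt (ball_max V (norm x0)) / sqrt K))"
        by (rule mult_left_mono[OF node]) (use eb_pos in simp)
      also have "\<dots> = exp (- s * t) * (c * sqrt (ball_max V (norm x0)))" by (simp add: c_def)
      also have "\<dots> \<le> exp (- s * t) * a (norm x0)"
        using \<open>c * sqrt _ \<le> a _\<close> by simp
      finally show ?thesis using i(3) by simp
    qed
  qed
  show ?thesis unfolding robust_K_exp_stable_def using \<open>s > 0\<close> a_K bound by blast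
qed

end

theorem theorem4p9:
  fixes f :: "'a::euclidean_space \<Rightarrow> 'a"
    and z :: "real \<Rightarrow> 'a \<Rightarrow> 'a"
    and s :: nat and a :: "nat \<Rightarrow> nat \<Rightarrow> real" and bw :: "nat \<Rightarrow> real"
    and phi :: "'a \<Rightarrow> real" and M :: "real \<Rightarrow> real"
    and p :: nat
    and V :: "'a \<Rightarrow> real" and gV :: "'a \<Rightarrow> 'a" and W :: "'a \<Rightarrow> real"
    and b :: real and C :: "'a \<Rightarrow> real" and lam :: real
  assumes f_lip: "loc_lipschitz f" and f0: "f 0 = 0"
    and flow: "is_flow f z"
    and consistent: "(\<Sum>i<s. bw i) = 1"
    and phi_cont: "continuous_on UNIV phi" and phi_pos: "\<forall>x. phi x > 0"
    and stages_ex: "\<forall>x h. 0 \<le> h \<and> h \<le> phi x \<longrightarrow> (\<exists>Y. rk_stages s a f h x Y)"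
    and stages_uniq: "\<forall>x h Y Y'. 0 \<le> h \<and> h \<le> phi x \<and> rk_stages s a f h x Y \<and> rk_stages s a f h x Y'
                        \<longrightarrow> (\<forall>i<s. Y i = Y' i)"
    and M_cont: "continuous_on {0..} M" and M_mono: "mono_on {0..} M"
    and F_bound: "\<forall>x h. 0 \<le> h \<and> h \<le> phi x \<longrightarrow> norm (rk_F s a bw f h x) \<le> norm x * M (norm x)"
    and p_ge: "p \<ge> 1"
    and lyap: "is_lyapunov f V gV"
    and W_cont: "continuous_on UNIV W" and W_pd: "pos_def W"
    and hyp_i: "\<forall>x h. 0 \<le> h \<and> h \<le> phi x \<longrightarrow> V (z h x) \<le> V x - h * W x"
    and b_nonneg: "b \<ge> 0"
    and hyp_ii: "\<forall>x h. 0 \<le> h \<and> h \<le> phi x \<longrightarrow>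
                   norm (z h x) \<le> exp b * norm x \<and>
                   norm (x + h *\<^sub>R rk_F s a bw f h x) \<le> exp b * norm x"
    and C_cont: "continuous_on UNIV C" and C_pd: "pos_def C"
    and hyp_iii: "\<forall>x h. 0 \<le> h \<and> h \<le> phi x \<longrightarrow>
                   norm (z h x - x - h *\<^sub>R rk_F s a bw f h x) \<le> C x * h ^ (p + 1)"
    and lam: "0 < lam" "lam < 1"
    and phi_le: "\<forall>x. x \<noteq> 0 \<longrightarrow>
                   phi x \<le> ((1 - lam) * W x / (lVb gV b x * C x)) powr (1 / real p)"
  shows "URGAS (rk_F s a bw f) phi \<and>
         ((\<exists>\<sigma> K. \<sigma> > 0 \<and> K > 0 \<and> (\<forall>x. W x \<ge> 2 * \<sigma> * V x \<and> V x \<ge> K * (norm x)\<^sup>2))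
            \<longrightarrow> robust_K_exp_stable (rk_F s a bw f) phi)"
proof -
  have V_deriv: "\<And>x. (V has_derivative (\<lambda>v. gV x \<bullet> v)) (at x)" and gV_cont: "continuous_on UNIV gV"
    and V_pd: "pos_def V" and V_unb: "filterlim V at_top at_infinity"
    using lyap by (auto simp: is_lyapunov_def)
  have V_cont: "continuous_on UNIV V"
    using V_deriv by (intro continuous_at_imp_continuous_on ballI has_derivative_continuous) blast
  interpret lyapunov_hybrid_system "rk_F s a bw f" phi V W lam "exp b"
  proof
    fix x and h :: real assume h: "0 \<le> h" "h \<le> phi x"
    have local_error: "norm (z h x - (x + h *\<^sub>R rk_F s a bw f h x)) \<le> C x * h ^ (p + 1)"
      using hyp_iii h by (simp add: diff_diff_eq)
    show "V (x + h *\<^sub>R rk_F s a bw f h x) \<le> V x - lam * h * W x"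
    proof (rule one_step_descent[OF V_deriv gV_cont V_pd W_pd C_pd _ _ _ local_error lam(2) p_ge h(1)])
      show "x \<noteq> 0 \<Longrightarrow> h \<le> ((1 - lam) * W x / (lVb gV b x * C x)) powr (1 / real p)"
        using phi_le h(2) by auto
    qed (use hyp_i hyp_ii h in auto)
    show "norm (x + t *\<^sub>R rk_F s a bw f h x) \<le> exp b * norm x" if "0 \<le> t" "t \<le> h" for t
    proof (rule segment_norm_bound[OF _ _ that])
      show "norm (x + h *\<^sub>R rk_F s a bw f h x) \<le> exp b * norm x" using hyp_ii h by blast
      show "1 \<le> exp b" using b_nonneg by simp
    qed
  qed (use phi_cont phi_pos V_cont V_pd V_unb W_cont W_pd lam in auto)
  show ?thesis
    using urgas exponential_stability by blast
qed

end
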